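(* Let $(M,\phi)$ be a regular base system and suppose there is $\kappa\ge 1$ with $\|D\phi^{-1}\|_{C^0(M)}:=\sup_{x\in M}\|D_x\phi^{-1}\|_{\mathrm{op}}\le\kappa$. Let $\omega: M\to\mathbb{R}$ be $C^2$ and let $F:\mathbb{R}^N\times\mathbb{R}\to\mathbb{R}^N$ be $C^2$. If $F$ satisfies the echo state property with rate $\rho<1/\kappa$ on $U=\omega(M)$, then the synchronization function $f: M\to\mathbb{R}^N$ of the driven system (which exists and is unique under these hypotheses) is $C^1$. In particular, weak (continuous but non-differentiable) generalized synchronization does not arise.
   Context: A regular base system is a pair $(M,\phi)$ such that either (i) $M=S^1=\mathbb{R}/\mathbb{Z}$ and $\phi$ is $C^2$-conjugate (via a $C^2$ diffeomorphism of $S^1$) to an irrational rotation $\theta\mapsto\theta+\alpha \pmod 1$, $\alpha\notin\mathbb{Q}$; or (ii) $M=T^k=\mathbb{R}^k/\mathbb{Z}^k$ and $\phi$ is $C^2$-conjugate to a translation $\boldsymbol\theta\mapsto\boldsymbol\theta+\boldsymbol\alpha \pmod{\mathbb{Z}^k}$ with $\{1,\alpha_1,\dots,\alpha_k\}$ rationally independent. Norms on $M$ are with respect to the standard flat metric. The driven (skew-product) system is $\Psi(x,h)=(\phi(x),F(h,\omega(x)))$ on $M\times\mathbb{R}^N$, i.e. $h_{t+1}=F(h_t,u_t)$ with $u_t=\omega(\phi^t(x_0))$. Echo state property (ESP) with rate $\rho<1$ on a compact input set $U\subset\mathbb{R}$: there is a compact $K\subset\mathbb{R}^N$ with $F(K,u)\subseteq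 K$ for all $u\in U$ and $\sup_{(h,u)\in K\times U}\|\partial_hF(h,u)\|_{\mathrm{op}}\le\rho$. A synchronization function is a continuous $f:M\to\mathbb{R}^N$ such that (a) $f(\phi(x))=F(f(x),\omega(x))$ for all $x\in M$, and (b) for every $x_0\in M$ and every $h_0\in K$, the trajectory $h_t$ of $h_{t+1}=F(h_t,\omega(\phi^t(x_0)))$ satisfies $\|h_t-f(\phi^t(x_0))\|\to0$ as $t\to\infty$. *)

theory Defs
  imports "HOL-Analysis.Analysis"
begin

text \<open>The torus T^k = R^k / Z^k is modelled through lifts: points are vectors in
  real^'k, two vectors represent the same point iff they differ by an integer vector.
  S^1 is the case CARD('k) = 1.\<close>

definition tequiv :: "real^'k \<Rightarrow> real^'k \<Rightarrow> bool" where
  "tequiv x y \<longleftrightarrow> (\<forall>i. x$i - y$i \<in> \<int>)"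

definition torus_map :: "(real^'k \<Rightarrow> real^'k) \<Rightarrow> bool" where
  "torus_map P \<longleftrightarrow> (\<forall>x y. tequiv x y \<longrightarrow> tequiv (P x) (P y))"

definition torus_fun :: "(real^'k \<Rightarrow> 'b) \<Rightarrow> bool" where
  "torus_fun g \<longleftrightarrow> (\<forall>x y. tequiv x y \<longrightarrow> g x = g y)"

definition C1_map :: "('a::euclidean_space \<Rightarrow> 'b::euclidean_space) \<Rightarrow> bool" where
  "C1_map f \<longleftrightarrow> (\<exists>f'. (\<forall>x. (f has_derivative blinfun_apply (f' x)) (at x))
                       \<and> continuous_on UNIV f')"

definition C2_map :: "('a::euclidean_space \<Rightarrow> 'b::euclidean_space) \<Rightarrow> bool" where
  "C2_map f \<longleftrightarrow> (\<exists>f' f''. (\<forall>x. (f has_derivative blinfun_apply (f' x)) (at x))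
                       \<and> (\<forall>x. (f' has_derivative blinfun_apply (f'' x)) (at x))
                       \<and> continuous_on UNIV f'')"

definition torus_C2_diffeo :: "(real^'k \<Rightarrow> real^'k) \<Rightarrow> bool" where
  "torus_C2_diffeo H \<longleftrightarrow> torus_map H \<and> C2_map H \<and>
     (\<exists>G. torus_map G \<and> C2_map G \<and> (\<forall>x. tequiv (G (H x)) x \<and> tequiv (H (G x)) x))"

definition rat_indep :: "real^'k \<Rightarrow> bool" where
  "rat_indep \<alpha> \<longleftrightarrow> (\<forall>(c0::rat) (c::'k \<Rightarrow> rat).
      of_rat c0 + (\<Sum>i\<in>UNIV. of_rat (c i) * \<alpha>$i) = 0 \<longrightarrow> c0 = 0 \<and> (\<forall>i. c i = 0))"

text \<open>(T^k, phi) is a regular base system; Phi is a lift of phi. phi = h o R_alpha o h^-1.\<close>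
definition regular_base_system :: "(real^'k \<Rightarrow> real^'k) \<Rightarrow> bool" where
  "regular_base_system Phi \<longleftrightarrow> torus_map Phi \<and>
     (\<exists>H G \<alpha>. torus_C2_diffeo H \<and> torus_map G \<and>
        (\<forall>x. tequiv (G (H x)) x \<and> tequiv (H (G x)) x) \<and>
        rat_indep \<alpha> \<and> (\<forall>x. tequiv (Phi x) (H (G x + \<alpha>))))"

definition ESP :: "((real^'n) \<times> real \<Rightarrow> real^'n) \<Rightarrow> real set \<Rightarrow> real \<Rightarrow> (real^'n) set \<Rightarrow> bool" where
  "ESP F U \<rho> K \<longleftrightarrow> \<rho> < 1 \<and> compact K \<and> K \<noteq> {} \<and>
     (\<forall>u\<in>U. \<forall>h\<in>K. F (h, u) \<in> K) \<and>
     (\<forall>h\<in>K. \<forall>u\<in>U. onorm (frechet_derivative (\<lambda>h'. F (h', u)) (at h)) \<le> \<rho>)"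

primrec traj :: "(real^'k \<Rightarrow> real^'k) \<Rightarrow> (real^'k \<Rightarrow> real) \<Rightarrow> ((real^'n) \<times> real \<Rightarrow> real^'n)
                  \<Rightarrow> real^'k \<Rightarrow> real^'n \<Rightarrow> nat \<Rightarrow> real^'n" where
  "traj Phi w F x0 h0 0 = h0"
| "traj Phi w F x0 h0 (Suc t) = F (traj Phi w F x0 h0 t, w ((Phi ^^ t) x0))"

definition sync_function :: "(real^'k \<Rightarrow> real^'k) \<Rightarrow> (real^'k \<Rightarrow> real) \<Rightarrow> ((real^'n) \<times> real \<Rightarrow> real^'n)
       \<Rightarrow> (real^'n) set \<Rightarrow> (real^'k \<Rightarrow> real^'n) \<Rightarrow> bool" where
  "sync_function Phi w F K f \<longleftrightarrow> torus_fun f \<and> continuous_on UNIV f \<and>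
     (\<forall>x. f (Phi x) = F (f x, w x)) \<and>
     (\<forall>x0. \<forall>h0\<in>K. (\<lambda>t. norm (traj Phi w F x0 h0 t - f ((Phi ^^ t) x0))) \<longlonglongrightarrow> 0)"

end

(* The synchronisation function f is the uniform limit of the maps f_n given by f_0 = h_0 and
   f_(n+1) (x) = F (f_n (phi^-1 x), omega (phi^-1 x)), i.e. f_n (x) is the state reached at x by the
   driven system started in h_0 at phi^-n x.  Pointwise attraction, compactness of the torus and
   the contraction of F in h near K make this convergence uniform.  Differentiating the recursion,
     Df_(n+1) (x) = (d_h F . Df_n + d_u F . D omega) (phi^-1 x) o D phi^-1 (x),
   shows that Df_(n+1) - Df_(m+1) is bounded by kappa rho times Df_n - Df_m plus a term that tends
   to zero uniformly with n, m; since kappa rho < 1 the derivatives are uniformly Cauchy, and f is C^1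
   as the limit of C^1 maps with uniformly convergent derivatives.
   From the base system only the C^2 conjugacy to a translation is used, to obtain a continuous
   lift of phi and a C^1 lift of phi^-1; rational independence matters only for the existence of
   the synchronisation function. *)
theory Submission
  imports Defs
begin

lemma tequiv_refl [simp]: "tequiv x x"
  by (simp add: tequiv_def)

lemma tequiv_sym: "tequiv x y \<Longrightarrow> tequiv y x"
  unfolding tequiv_def by (metis Ints_minus minus_diff_eq)

lemma tequiv_trans [trans]: "tequiv x y \<Longrightarrow> tequiv y z \<Longrightarrow> tequiv x z"
  unfolding tequiv_def by (metis Ints_add diff_add_cancel add_diff_eq)

lemma tequiv_add: "tequiv x y \<Longrightarrow> tequiv (x + a) (y + a)"
  by (simp add: tequiv_def)

lemma torus_mapD: "torus_map P \<Longrightarrow> tequiv x y \<Longrightarrow> tequiv (P x) (P y)"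
  unfolding torus_map_def by blast

lemma torus_funD: "torus_fun g \<Longrightarrow> tequiv x y \<Longrightarrow> g x = g y"
  unfolding torus_fun_def by blast

lemma torus_map_funpow: "torus_map P \<Longrightarrow> torus_map (P ^^ n)"
  by (induction n) (auto simp: torus_map_def)

lemma tequiv_cbox_representative: "\<exists>y\<in>cbox 0 1. tequiv x y"
proof
  show "tequiv x (\<chi> i. frac (x $ i))"
    by (simp add: tequiv_def frac_def)
  show "(\<chi> i. frac (x $ i)) \<in> cbox 0 1"
    by (auto simp: mem_box_cart frac_lt_1 less_imp_le)
qed

lemma torus_fun_range: "torus_fun g \<Longrightarrow> range g = g ` cbox 0 1"
  using tequiv_cbox_representative by (fastforce dest: torus_funD)

lemma compact_range_torus_fun:
  "torus_fun g \<Longrightarrow> continuous_on UNIV g \<Longrightarrow> compact (range g)"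
  unfolding torus_fun_range
  by (rule compact_continuous_image[OF continuous_on_subset[OF _ subset_UNIV] compact_cbox])

lemma torus_fun_derivative:
  fixes g :: "real^'k \<Rightarrow> 'b::real_normed_vector"
  assumes g: "torus_fun g" and g': "\<And>x. (g has_derivative blinfun_apply (g' x)) (at x)"
  shows "torus_fun g'"
  unfolding torus_fun_def
proof (intro allI impI)
  fix y z :: "real^'k" assume "tequiv y z"
  define d where "d = z - y"
  have "tequiv (x + d) x" for x
    using tequiv_sym[OF \<open>tequiv y z\<close>] by (simp add: tequiv_def d_def)
  then have "(\<lambda>x. g (x + d)) = g"
    using g by (auto dest: torus_funD)
  moreover have "((\<lambda>x. g (x + d)) has_derivative blinfun_apply (g' (y + d))) (at y)"
    using has_derivative_compose[OF has_derivative_add_const[OF has_derivative_ident] g']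
    by (simp add: o_def)
  ultimately have "blinfun_apply (g' z) = blinfun_apply (g' y)"
    using has_derivative_unique[OF _ g'[of y]] by (simp add: d_def)
  then show "g' y = g' z"
    by (simp add: blinfun_apply_inject)
qed

lemma continuous_Ints_valued_constant:
  fixes g :: "'a::topological_space \<Rightarrow> real"
  assumes "connected S" "continuous_on S g" "\<And>x. x \<in> S \<Longrightarrow> g x \<in> \<int>"
  shows "g constant_on S"
proof (rule continuous_discrete_range_constant[OF assms(1,2)])
  fix x assume "x \<in> S"
  show "\<exists>e>0. \<forall>y. y \<in> S \<and> g y \<noteq> g x \<longrightarrow> e \<le> norm (g y - g x)"
    using assms(3) \<open>x \<in> S\<close> by (intro exI[of _ 1]) (auto intro!: Ints_nonzero_abs_ge1)
qed

lemma tequiv_continuous_eq_plus_const: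
  fixes g h :: "real^'k \<Rightarrow> real^'m"
  assumes "continuous_on UNIV g" "continuous_on UNIV h" "\<And>x. tequiv (g x) (h x)"
  shows "g = (\<lambda>x. h x + (g 0 - h 0))"
proof -
  have "(\<lambda>x. g x $ i - h x $ i) constant_on UNIV" for i
    using assms by (intro continuous_Ints_valued_constant continuous_intros)
      (auto simp: tequiv_def)
  then have "g x $ i - h x $ i = g 0 $ i - h 0 $ i" for x i
    unfolding constant_on_def by (metis UNIV_I)
  then show ?thesis
    by (auto simp: vec_eq_iff algebra_simps)
qed

text \<open>The partial derivative \<open>\<partial>\<^sub>h F (h, u)\<close> of a map \<open>F\<close> with derivative \<open>F'\<close> is
  \<open>F' (h, u) o\<^sub>L embed_fst\<close>.\<close>
definition embed_fst :: "'a::real_normed_vector \<Rightarrow>\<^sub>L ('a \<times> 'b::real_normed_vector)" where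
  "embed_fst = Blinfun (\<lambda>v. (v, 0))"

definition embed_snd :: "'b::real_normed_vector \<Rightarrow>\<^sub>L ('a::real_normed_vector \<times> 'b)" where
  "embed_snd = Blinfun (\<lambda>v. (0, v))"

definition blinfun_pair ::
  "('c::real_normed_vector \<Rightarrow>\<^sub>L 'a::real_normed_vector) \<Rightarrow> ('c \<Rightarrow>\<^sub>L 'b::real_normed_vector)
    \<Rightarrow> 'c \<Rightarrow>\<^sub>L ('a \<times> 'b)" where
  "blinfun_pair X Y = (embed_fst o\<^sub>L X) + (embed_snd o\<^sub>L Y)"

lemma embed_fst_apply [simp]: "blinfun_apply embed_fst v = (v, 0)"
  unfolding embed_fst_def
  by (subst bounded_linear_Blinfun_apply) (auto intro!: bounded_linear_Pair bounded_linear_ident)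

lemma embed_snd_apply [simp]: "blinfun_apply embed_snd v = (0, v)"
  unfolding embed_snd_def
  by (subst bounded_linear_Blinfun_apply) (auto intro!: bounded_linear_Pair bounded_linear_ident)

lemma blinfun_pair_apply [simp]: "blinfun_apply (blinfun_pair X Y) v = (X v, Y v)"
  by (simp add: blinfun_pair_def blinfun.add_left)

lemma continuous_on_blinfun_pair [continuous_intros]:
  "continuous_on S X \<Longrightarrow> continuous_on S Y \<Longrightarrow> continuous_on S (\<lambda>x. blinfun_pair (X x) (Y x))"
  unfolding blinfun_pair_def
  by (intro continuous_intros bounded_bilinear.continuous_on[OF bounded_bilinear_blinfun_compose])

lemma norm_blinfun_pair_diff:
  fixes A B :: "('a::real_normed_vector \<times> 'b::real_normed_vector) \<Rightarrow>\<^sub>L 'c::real_normed_vector"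
  shows "norm ((A o\<^sub>L blinfun_pair X1 Y) - (B o\<^sub>L blinfun_pair X2 Y))
    \<le> norm (A o\<^sub>L embed_fst) * norm (X1 - X2) + norm (A - B) * (norm X2 + norm Y)"
proof (rule norm_blinfun_bound)
  fix v
  have "A (X1 v, Y v) = A (X1 v - X2 v, 0) + A (X2 v, Y v)"
    by (simp add: blinfun.add_right[symmetric])
  then have "A (X1 v, Y v) - B (X2 v, Y v) = (A o\<^sub>L embed_fst) ((X1 - X2) v) + (A - B) (X2 v, Y v)"
    by (simp add: blinfun.diff_left)
  also have "norm \<dots> \<le> norm (A o\<^sub>L embed_fst) * (norm (X1 - X2) * norm v)
      + norm (A - B) * (norm X2 * norm v + norm Y * norm v)"
  proof (rule order_trans[OF norm_triangle_ineq add_mono])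
    show "norm ((A o\<^sub>L embed_fst) ((X1 - X2) v)) \<le> norm (A o\<^sub>L embed_fst) * (norm (X1 - X2) * norm v)"
      by (rule order_trans[OF norm_blinfun mult_left_mono[OF norm_blinfun]]) simp
    have "norm (X2 v, Y v) \<le> norm X2 * norm v + norm Y * norm v"
      by (rule order_trans[OF norm_Pair_le add_mono[OF norm_blinfun norm_blinfun]])
    then show "norm ((A - B) (X2 v, Y v)) \<le> norm (A - B) * (norm X2 * norm v + norm Y * norm v)"
      by (rule order_trans[OF norm_blinfun mult_left_mono]) simp
  qed
  finally show "norm (((A o\<^sub>L blinfun_pair X1 Y) - (B o\<^sub>L blinfun_pair X2 Y)) v)
    \<le> (norm (A o\<^sub>L embed_fst) * norm (X1 - X2) + norm (A - B) * (norm X2 + norm Y)) * norm v"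
    by (simp add: blinfun.diff_left algebra_simps)
qed simp

lemma norm_blinfun_pair_le:
  "norm (A o\<^sub>L blinfun_pair X Y) \<le> norm (A o\<^sub>L embed_fst) * norm X + norm A * norm Y"
  using norm_blinfun_pair_diff[of A X Y 0 0] by simp

lemma has_derivative_partial_fst:
  assumes "(F has_derivative blinfun_apply F') (at (h, u))"
  shows "((\<lambda>h. F (h, u)) has_derivative blinfun_apply (F' o\<^sub>L embed_fst)) (at h)"
proof -
  have "blinfun_apply (F' o\<^sub>L embed_fst) = (\<lambda>v. F' (v, 0))"
    by auto
  then show ?thesis
    using has_derivative_compose[OF has_derivative_Pair[OF has_derivative_ident has_derivative_const] assms]
    by (simp add: o_def)
qed

lemma C2_map_imp_C1_map: "C2_map f \<Longrightarrow> C1_map f"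
  unfolding C2_map_def C1_map_def
  by (blast intro: continuous_at_imp_continuous_on has_derivative_continuous)

lemma C1_map_continuous: "C1_map f \<Longrightarrow> continuous_on UNIV f"
  unfolding C1_map_def
  by (blast intro: continuous_at_imp_continuous_on has_derivative_continuous)

lemma continuous_on_funpow:
  fixes g :: "'a::topological_space \<Rightarrow> 'a"
  assumes "continuous_on UNIV g"
  shows "continuous_on UNIV (g ^^ n)"
proof (induction n)
  case (Suc n)
  have "continuous_on UNIV (\<lambda>x. g ((g ^^ n) x))"
    by (rule continuous_on_compose2[OF assms Suc]) simp
  then show ?case
    by (simp add: o_def)
qed (simp add: continuous_on_id)

lemma C1_map_compose:
  assumes "C1_map f" "C1_map g"
  shows "C1_map (\<lambda>x. f (g x))"
proof -
  obtain f' g' where f': "\<And>x. (f has_derivative blinfun_apply (f' x)) (at x)" "continuous_on UNIV f'"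
    and g': "\<And>x. (g has_derivative blinfun_apply (g' x)) (at x)" "continuous_on UNIV g'"
    using assms unfolding C1_map_def by blast
  have "((\<lambda>x. f (g x)) has_derivative blinfun_apply (f' (g x) o\<^sub>L g' x)) (at x)" for x
    using has_derivative_compose[OF g'(1) f'(1)] by (simp add: blinfun_compose.rep_eq o_def)
  moreover have "continuous_on UNIV (\<lambda>x. f' (g x))"
    using continuous_on_compose[OF C1_map_continuous[OF assms(2)] continuous_on_subset[OF f'(2)]]
    by (simp add: o_def)
  then have "continuous_on UNIV (\<lambda>x. f' (g x) o\<^sub>L g' x)"
    using bounded_bilinear.continuous_on[OF bounded_bilinear_blinfun_compose _ g'(2)] by blast
  ultimately show ?thesis
    unfolding C1_map_def by (intro exI[of _ "\<lambda>x. f' (g x) o\<^sub>L g' x"]) blast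
qed

lemma C1_map_add_const: "C1_map f \<Longrightarrow> C1_map (\<lambda>x. f x + c)"
  unfolding C1_map_def using has_derivative_add_const by blast

lemma uniform_limit_blinfun_apply_le:
  fixes D :: "'i \<Rightarrow> 'a::topological_space \<Rightarrow> ('b::real_normed_vector \<Rightarrow>\<^sub>L 'c::real_normed_vector)"
  assumes "uniform_limit S D D' F" "e > 0"
  shows "\<forall>\<^sub>F n in F. \<forall>x\<in>S. \<forall>h. norm (D n x h - D' x h) \<le> e * norm h"
  using uniform_limitD[OF assms]
proof (elim eventually_mono, intro ballI allI)
  fix n x h assume "\<forall>x\<in>S. dist (D n x) (D' x) < e" "x \<in> S"
  then have "norm (D n x - D' x) \<le> e"
    by (simp add: dist_norm less_imp_le)
  have "norm (D n x h - D' x h) = norm ((D n x - D' x) h)"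
    by (simp add: blinfun.diff_left)
  also have "\<dots> \<le> norm (D n x - D' x) * norm h"
    by (rule norm_blinfun)
  also have "\<dots> \<le> e * norm h"
    using \<open>norm (D n x - D' x) \<le> e\<close> by (simp add: mult_right_mono)
  finally show "norm (D n x h - D' x h) \<le> e * norm h" .
qed

lemma C1_map_uniform_limit:
  fixes g :: "nat \<Rightarrow> 'a::euclidean_space \<Rightarrow> 'b::euclidean_space"
  assumes g': "\<And>n x. (g n has_derivative blinfun_apply (D n x)) (at x)"
    and cont: "\<And>n. continuous_on UNIV (D n)"
    and Cauchy: "uniformly_Cauchy_on UNIV D"
    and lim: "\<And>x. (\<lambda>n. g n x) \<longlonglongrightarrow> f x"
  shows "C1_map f"
proof -
  obtain D' where D': "uniform_limit UNIV D D' sequentially"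
    using Cauchy uniformly_convergent_eq_Cauchy unfolding uniformly_convergent_on_def by blast
  have "\<exists>f\<^sub>0. \<forall>x\<in>UNIV. (\<lambda>n. g n x) \<longlonglongrightarrow> f\<^sub>0 x \<and>
      (f\<^sub>0 has_derivative blinfun_apply (D' x)) (at x within UNIV)"
  proof (rule has_derivative_sequence[OF convex_UNIV _ _ UNIV_I lim])
    show "(g n has_derivative blinfun_apply (D n x)) (at x within UNIV)" for n x
      by (rule g')
    show "\<forall>\<^sub>F n in sequentially. \<forall>x\<in>UNIV. \<forall>h. norm (D n x h - D' x h) \<le> e * norm h"
      if "e > 0" for e
      by (rule uniform_limit_blinfun_apply_le[OF D' that])
  qed
  then obtain f\<^sub>0 where f\<^sub>0: "\<And>x. (\<lambda>n. g n x) \<longlonglongrightarrow> f\<^sub>0 x"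
    and "\<And>x. (f\<^sub>0 has_derivative blinfun_apply (D' x)) (at x)"
    by blast
  moreover have "f\<^sub>0 = f"
    by (rule ext, rule LIMSEQ_unique[OF f\<^sub>0 lim])
  ultimately have "\<And>x. (f has_derivative blinfun_apply (D' x)) (at x)"
    by simp
  moreover have "continuous_on UNIV D'"
    using uniform_limit_theorem[OF always_eventually D'] cont by auto
  ultimately show ?thesis
    unfolding C1_map_def by blast
qed

lemma regular_base_system_C2_conjugacy:
  assumes "regular_base_system Phi"
  obtains H G \<alpha> where "torus_map H" "C2_map H" "torus_map G" "C2_map G"
    "\<And>x. tequiv (G (H x)) x" "\<And>x. tequiv (H (G x)) x" "\<And>x. tequiv (Phi x) (H (G x + \<alpha>))"
proof -
  obtain H G\<^sub>0 \<alpha> where H: "torus_C2_diffeo H" and G\<^sub>0: "\<And>x. tequiv (H (G\<^sub>0 x)) x"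
    and Phi: "\<And>x. tequiv (Phi x) (H (G\<^sub>0 x + \<alpha>))"
    using assms unfolding regular_base_system_def by blast
  then obtain G where "torus_map H" "C2_map H" "torus_map G" "C2_map G"
    and G: "\<And>x. tequiv (G (H x)) x" "\<And>x. tequiv (H (G x)) x"
    unfolding torus_C2_diffeo_def by blast
  have "tequiv (G\<^sub>0 x) (G x)" for x
  proof -
    have "tequiv (G\<^sub>0 x) (G (H (G\<^sub>0 x)))"
      using G(1) by (rule tequiv_sym)
    also have "tequiv \<dots> (G x)"
      by (rule torus_mapD[OF \<open>torus_map G\<close> G\<^sub>0])
    finally show ?thesis .
  qed
  then have "tequiv (Phi x) (H (G x + \<alpha>))" for x
    using tequiv_trans[OF Phi torus_mapD[OF \<open>torus_map H\<close> tequiv_add]] by blast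
  then show thesis
    using that \<open>torus_map H\<close> \<open>C2_map H\<close> \<open>torus_map G\<close> \<open>C2_map G\<close> G by blast
qed

lemma regular_base_system_continuous_lift:
  assumes "regular_base_system Phi"
  obtains Q where "continuous_on UNIV Q" "torus_map Q" "\<And>x. tequiv (Phi x) (Q x)"
proof -
  obtain H G \<alpha> where H: "torus_map H" "C2_map H" and G: "torus_map G" "C2_map G"
    and Phi: "\<And>x. tequiv (Phi x) (H (G x + \<alpha>))"
    using regular_base_system_C2_conjugacy[OF assms] by metis
  show thesis
  proof (rule that[OF _ _ Phi])
    show "continuous_on UNIV (\<lambda>x. H (G x + \<alpha>))"
      by (rule C1_map_continuous[OF C1_map_compose[OF C2_map_imp_C1_map[OF H(2)]
            C1_map_add_const[OF C2_map_imp_C1_map[OF G(2)]]]])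
    show "torus_map (\<lambda>x. H (G x + \<alpha>))"
      unfolding torus_map_def using torus_mapD[OF H(1) tequiv_add[OF torus_mapD[OF G(1)]]] by blast
  qed
qed

text \<open>A continuous inverse \<open>Psi\<close> of \<open>Phi\<close> agrees, up to an integer translation, with the
  inverse \<open>x \<mapsto> H (G x - \<alpha>)\<close> built from the conjugacy, and is therefore \<open>C\<^sup>1\<close>.\<close>
lemma regular_base_system_inverse_C1:
  assumes "regular_base_system Phi" "torus_map Psi" "\<And>x. tequiv (Psi (Phi x)) x"
    and "continuous_on UNIV Psi"
  shows "C1_map Psi"
proof -
  obtain H G \<alpha> where H: "torus_map H" "C2_map H" and G: "torus_map G" "C2_map G"
    and GH: "\<And>x. tequiv (G (H x)) x" and HG: "\<And>x. tequiv (H (G x)) x"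
    and Phi: "\<And>x. tequiv (Phi x) (H (G x + \<alpha>))"
    using regular_base_system_C2_conjugacy[OF assms(1)] by metis
  define P where "P x = H (G x + - \<alpha>)" for x
  have P: "C1_map P"
    unfolding P_def
    by (rule C1_map_compose[OF C2_map_imp_C1_map[OF H(2)] C1_map_add_const[OF C2_map_imp_C1_map[OF G(2)]]])
  have "tequiv (Psi x) (P x)" for x
  proof -
    have "tequiv (G (P x) + \<alpha>) (G x + - \<alpha> + \<alpha>)"
      unfolding P_def by (rule tequiv_add[OF GH])
    then have "tequiv (G (P x) + \<alpha>) (G x)"
      by simp
    then have "tequiv (Phi (P x)) x"
      using tequiv_trans[OF Phi tequiv_trans[OF torus_mapD[OF H(1)] HG]] by blast
    have "tequiv (Psi x) (Psi (Phi (P x)))"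
      by (rule tequiv_sym[OF torus_mapD[OF assms(2) \<open>tequiv (Phi (P x)) x\<close>]])
    also have "tequiv \<dots> (P x)"
      by (rule assms(3))
    finally show ?thesis .
  qed
  then have "Psi = (\<lambda>x. P x + (Psi 0 - P 0))"
    using assms(4) C1_map_continuous[OF P] by (rule tequiv_continuous_eq_plus_const[rotated 2])
  then show ?thesis
    using C1_map_add_const[OF P, of "Psi 0 - P 0"] by simp
qed

lemma regular_base_system_inverse_derivative:
  assumes "regular_base_system Phi" "torus_map Psi" "\<And>x. tequiv (Psi (Phi x)) x"
    and "\<And>x. Psi differentiable (at x)" "\<And>x. onorm (frechet_derivative Psi (at x)) \<le> \<kappa>"
  obtains Psi' where "\<And>x. (Psi has_derivative blinfun_apply (Psi' x)) (at x)"
    "continuous_on UNIV Psi'" "\<And>x. norm (Psi' x) \<le> \<kappa>"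
proof -
  have "continuous_on UNIV Psi"
    using assms(4) by (blast intro: continuous_at_imp_continuous_on differentiable_imp_continuous_within)
  then obtain Psi' where Psi': "\<And>x. (Psi has_derivative blinfun_apply (Psi' x)) (at x)"
    and "continuous_on UNIV Psi'"
    using regular_base_system_inverse_C1[OF assms(1-3)] unfolding C1_map_def by blast
  moreover have "norm (Psi' x) \<le> \<kappa>" for x
    using assms(5) frechet_derivative_at[OF Psi'] by (simp add: norm_blinfun.rep_eq)
  ultimately show thesis
    by (rule that)
qed

lemma norm_blinfun_compose_embed_fst_le:
  fixes X :: "('a::real_normed_vector \<times> 'b::real_normed_vector) \<Rightarrow>\<^sub>L 'c::real_normed_vector"
  shows "norm (X o\<^sub>L embed_fst) \<le> norm X"
proof -
  have "norm (embed_fst :: 'a \<Rightarrow>\<^sub>L ('a \<times> 'b)) \<le> 1"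
    by (rule norm_blinfun_bound) (auto simp: norm_Pair)
  have "norm (X o\<^sub>L embed_fst) \<le> norm X * norm (embed_fst :: 'a \<Rightarrow>\<^sub>L ('a \<times> 'b))"
    by (rule norm_blinfun_compose)
  also have "\<dots> \<le> norm X * 1"
    by (rule mult_left_mono[OF \<open>norm embed_fst \<le> 1\<close> norm_ge_zero])
  finally show ?thesis
    by simp
qed

lemma partial_derivative_bound_near_compact:
  fixes F' :: "'a::euclidean_space \<times> 'b::real_normed_vector \<Rightarrow> ('a \<times> 'b) \<Rightarrow>\<^sub>L 'c::real_normed_vector"
  assumes F': "continuous_on UNIV F'" and K: "compact K" and U: "compact U"
    and bound: "\<And>h u. h \<in> K \<Longrightarrow> u \<in> U \<Longrightarrow> norm (F' (h, u) o\<^sub>L embed_fst) \<le> \<rho>"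
    and "\<rho> < \<rho>'"
  obtains \<epsilon> where "\<epsilon> > 0"
    "\<And>a b u. a \<in> K \<Longrightarrow> dist b a < \<epsilon> \<Longrightarrow> u \<in> U \<Longrightarrow>
      norm (F' (b, u) o\<^sub>L embed_fst) \<le> \<rho>'"
proof -
  define T where "T = ((\<lambda>p. fst p + snd p) ` (K \<times> cball 0 1)) \<times> U"
  have "compact T"
    unfolding T_def using K U
    by (intro compact_Times compact_continuous_image compact_cball continuous_intros)
  then have "uniformly_continuous_on T F'"
    using F' by (blast intro: compact_uniformly_continuous continuous_on_subset)
  then obtain d where "d > 0"
    and d: "\<And>p q. p \<in> T \<Longrightarrow> q \<in> T \<Longrightarrow> dist q p < d \<Longrightarrow> dist (F' q) (F' p) < \<rho>' - \<rho>"
    using \<open>\<rho> < \<rho>'\<close> unfolding uniformly_continuous_on_def by (metis diff_gt_0_iff_gt)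
  show thesis
  proof (rule that[of "min d 1"])
    show "min d 1 > 0"
      using \<open>d > 0\<close> by simp
    fix a b u assume "a \<in> K" "dist b a < min d 1" "u \<in> U"
    then have "(a, u) \<in> T"
      unfolding T_def by (auto intro!: image_eqI[of _ _ "(a, 0)"])
    moreover have "(b, u) \<in> T"
      unfolding T_def using \<open>a \<in> K\<close> \<open>dist b a < min d 1\<close> \<open>u \<in> U\<close>
      by (auto intro!: image_eqI[of _ _ "(a, b - a)"] simp: dist_norm norm_minus_commute)
    moreover have "dist (b, u) (a, u) < d"
      using \<open>dist b a < min d 1\<close> by (simp add: dist_Pair_Pair)
    ultimately have close: "norm (F' (b, u) - F' (a, u)) < \<rho>' - \<rho>"
      using d by (simp add: dist_norm)
    have "F' (b, u) o\<^sub>L embed_fst = (F' (a, u) o\<^sub>L embed_fst) + ((F' (b, u) - F' (a, u)) o\<^sub>L embed_fst)"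
      by (simp add: bounded_bilinear.diff_left[OF bounded_bilinear_blinfun_compose])
    also have "norm \<dots> \<le> norm (F' (a, u) o\<^sub>L embed_fst) + norm ((F' (b, u) - F' (a, u)) o\<^sub>L embed_fst)"
      by (rule norm_triangle_ineq)
    also have "\<dots> \<le> \<rho> + norm (F' (b, u) - F' (a, u))"
      using bound[OF \<open>a \<in> K\<close> \<open>u \<in> U\<close>] norm_blinfun_compose_embed_fst_le by (rule add_mono)
    finally show "norm (F' (b, u) o\<^sub>L embed_fst) \<le> \<rho>'"
      using close by simp
  qed
qed

lemma contraction_near_compact:
  fixes F :: "'a::euclidean_space \<times> 'b::euclidean_space \<Rightarrow> 'c::euclidean_space"
  assumes F': "\<And>p. (F has_derivative blinfun_apply (F' p)) (at p)" "continuous_on UNIV F'"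
    and "compact K" "compact U"
    and "\<And>h u. h \<in> K \<Longrightarrow> u \<in> U \<Longrightarrow> norm (F' (h, u) o\<^sub>L embed_fst) \<le> \<rho>"
    and "\<rho> < \<rho>'"
  obtains \<epsilon> where "\<epsilon> > 0"
    "\<And>a b u. a \<in> K \<Longrightarrow> dist b a < \<epsilon> \<Longrightarrow> u \<in> U \<Longrightarrow>
      norm (F (b, u) - F (a, u)) \<le> \<rho>' * norm (b - a)"
proof -
  obtain \<epsilon> where "\<epsilon> > 0"
    and \<epsilon>: "\<And>a b u. a \<in> K \<Longrightarrow> dist b a < \<epsilon> \<Longrightarrow> u \<in> U \<Longrightarrow>
      norm (F' (b, u) o\<^sub>L embed_fst) \<le> \<rho>'"
    using partial_derivative_bound_near_compact[OF F'(2) assms(3-6)] by blast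
  show thesis
  proof (rule that[OF \<open>\<epsilon> > 0\<close>])
    fix a b u assume "a \<in> K" "dist b a < \<epsilon>" "u \<in> U"
    show "norm (F (b, u) - F (a, u)) \<le> \<rho>' * norm (b - a)"
    proof (rule differentiable_bound[OF convex_ball])
      show "((\<lambda>h. F (h, u)) has_derivative blinfun_apply (F' (x, u) o\<^sub>L embed_fst))
          (at x within ball a \<epsilon>)" for x
        by (rule has_derivative_at_withinI[OF has_derivative_partial_fst[OF F'(1)]])
      show "onorm (blinfun_apply (F' (x, u) o\<^sub>L embed_fst)) \<le> \<rho>'" if "x \<in> ball a \<epsilon>" for x
        using \<epsilon>[OF \<open>a \<in> K\<close> _ \<open>u \<in> U\<close>, of x] that
        by (simp add: norm_blinfun.rep_eq[symmetric] dist_commute)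
      show "a \<in> ball a \<epsilon>" "b \<in> ball a \<epsilon>"
        using \<open>\<epsilon> > 0\<close> \<open>dist b a < \<epsilon>\<close> by (simp_all add: dist_commute)
    qed
  qed
qed

lemma contractive_recursion_iterate:
  fixes D :: "nat \<Rightarrow> 'a \<Rightarrow> 'b::real_normed_vector"
  assumes bounded: "\<And>n x. norm (D n x) \<le> M"
    and c: "0 \<le> c" "c < 1"
    and step: "\<And>n m x. N \<le> n \<Longrightarrow> N \<le> m \<Longrightarrow>
                 norm (D (Suc n) x - D (Suc m) x) \<le> c * norm (D n (g x) - D m (g x)) + \<eta>"
    and "N \<le> n" "N \<le> m"
  shows "norm (D (n + j) x - D (m + j) x) \<le> c ^ j * (2 * M) + \<eta> / (1 - c)"
proof (induction j arbitrary: x)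
  case 0
  have "norm (D n x - D m x) \<le> 2 * M"
    using norm_triangle_ineq4[of "D n x" "D m x"] bounded[of n x] bounded[of m x] by simp
  moreover have "0 \<le> \<eta>"
    using step[OF \<open>N \<le> n\<close> \<open>N \<le> n\<close>, of x] c(1) by simp
  ultimately show ?case
    using c by (simp add: add_increasing2)
next
  case (Suc j)
  have "norm (D (n + Suc j) x - D (m + Suc j) x) \<le> c * norm (D (n + j) (g x) - D (m + j) (g x)) + \<eta>"
    using step[of "n + j" "m + j" x] \<open>N \<le> n\<close> \<open>N \<le> m\<close> by simp
  also have "\<dots> \<le> c * (c ^ j * (2 * M) + \<eta> / (1 - c)) + \<eta>"
    using Suc.IH c(1) by (simp add: mult_left_mono)
  also have "\<dots> = c ^ Suc j * (2 * M) + \<eta> / (1 - c)"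
    using c(2) by (simp add: field_simps)
  finally show ?case .
qed

lemma uniformly_Cauchy_on_contractive_recursion:
  fixes D :: "nat \<Rightarrow> 'a \<Rightarrow> 'b::real_normed_vector"
  assumes bounded: "\<And>n x. norm (D n x) \<le> M"
    and c: "0 \<le> c" "c < 1" and "0 \<le> C"
    and step: "\<And>\<delta>. \<delta> > 0 \<Longrightarrow> \<exists>N. \<forall>n\<ge>N. \<forall>m\<ge>N. \<forall>x.
                 norm (D (Suc n) x - D (Suc m) x) \<le> c * norm (D n (g x) - D m (g x)) + C * \<delta>"
  shows "uniformly_Cauchy_on UNIV D"
proof (rule uniformly_Cauchy_onI)
  fix e :: real assume "e > 0"
  define \<eta> where "\<eta> = (1 - c) * (e / 4)"
  define \<delta> where "\<delta> = \<eta> / (C + 1)"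
  have "\<eta> > 0" "\<delta> > 0"
    using \<open>e > 0\<close> c \<open>0 \<le> C\<close> by (simp_all add: \<eta>_def \<delta>_def)
  have "C * \<delta> \<le> (C + 1) * \<delta>"
    using \<open>\<delta> > 0\<close> by simp
  also have "\<dots> = \<eta>"
    using \<open>0 \<le> C\<close> unfolding \<delta>_def times_divide_eq_right
    by (intro nonzero_mult_div_cancel_left) linarith
  finally have "C * \<delta> / (1 - c) \<le> e / 4"
    using c by (simp add: \<eta>_def pos_divide_le_eq mult.commute)
  obtain N where N: "\<And>n m x. N \<le> n \<Longrightarrow> N \<le> m \<Longrightarrow>
      norm (D (Suc n) x - D (Suc m) x) \<le> c * norm (D n (g x) - D m (g x)) + C * \<delta>"
    using step[OF \<open>\<delta> > 0\<close>] by blast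
  have "(\<lambda>j. c ^ j * (2 * M)) \<longlonglongrightarrow> 0"
    using c by (intro tendsto_mult_left_zero LIMSEQ_power_zero) simp
  then have "\<forall>\<^sub>F j in sequentially. c ^ j * (2 * M) < e / 2"
    by (rule order_tendstoD(2)[OF _ half_gt_zero[OF \<open>e > 0\<close>]])
  then obtain J where "c ^ J * (2 * M) < e / 2"
    unfolding eventually_sequentially by blast
  show "\<exists>N'. \<forall>x\<in>UNIV. \<forall>m\<ge>N'. \<forall>n\<ge>N'. dist (D m x) (D n x) < e"
  proof (intro exI[of _ "N + J"] ballI allI impI)
    fix x m n assume "N + J \<le> m" "N + J \<le> n"
    then have "N \<le> m - J" "N \<le> n - J" "m - J + J = m" "n - J + J = n"
      by arith+
    have "norm (D (m - J + J) x - D (n - J + J) x) \<le> c ^ J * (2 * M) + C * \<delta> / (1 - c)"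
      by (rule contractive_recursion_iterate[where D = D and M = M and c = c and N = N and g = g
            and \<eta> = "C * \<delta>"]) (fact bounded c N \<open>N \<le> m - J\<close> \<open>N \<le> n - J\<close>)+
    then have "norm (D m x - D n x) \<le> c ^ J * (2 * M) + C * \<delta> / (1 - c)"
      by (simp only: \<open>m - J + J = m\<close> \<open>n - J + J = n\<close>)
    then show "dist (D m x) (D n x) < e"
      using \<open>c ^ J * (2 * M) < e / 2\<close> \<open>C * \<delta> / (1 - c) \<le> e / 4\<close> \<open>e > 0\<close>
      unfolding dist_norm by linarith
  qed
qed

lemma ESP_partial_derivative_le:
  assumes "ESP F U \<rho> K" "\<And>p. (F has_derivative blinfun_apply (F' p)) (at p)" "h \<in> K" "u \<in> U"
  shows "norm (F' (h, u) o\<^sub>L embed_fst) \<le> \<rho>"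
proof -
  have "blinfun_apply (F' (h, u) o\<^sub>L embed_fst) = frechet_derivative (\<lambda>h'. F (h', u)) (at h)"
    by (rule frechet_derivative_at[OF has_derivative_partial_fst[OF assms(2)]])
  then show ?thesis
    using assms(1,3,4) unfolding ESP_def by (simp add: norm_blinfun.rep_eq)
qed

lemma ESP_contraction_near_K:
  fixes F :: "(real^'n) \<times> real \<Rightarrow> real^'n"
  assumes "ESP F U \<rho> K" "\<And>p. (F has_derivative blinfun_apply (F' p)) (at p)"
    and "continuous_on UNIV F'" "compact U"
  obtains \<epsilon> \<theta> where "\<epsilon> > 0" "0 \<le> \<theta>" "\<theta> < 1"
    "\<And>a b u. a \<in> K \<Longrightarrow> dist b a < \<epsilon> \<Longrightarrow> u \<in> U \<Longrightarrow>
      norm (F (b, u) - F (a, u)) \<le> \<theta> * norm (b - a)"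
proof -
  define \<theta> where "\<theta> = max 0 ((1 + \<rho>) / 2)"
  have "\<rho> < 1" "compact K"
    using assms(1) unfolding ESP_def by simp_all
  then have "\<rho> < \<theta>" "0 \<le> \<theta>" "\<theta> < 1"
    unfolding \<theta>_def by (simp_all add: less_max_iff_disj)
  obtain \<epsilon> where "\<epsilon> > 0"
    and contraction: "\<And>a b u. a \<in> K \<Longrightarrow> dist b a < \<epsilon> \<Longrightarrow> u \<in> U \<Longrightarrow>
      norm (F (b, u) - F (a, u)) \<le> \<theta> * norm (b - a)"
    using contraction_near_compact[OF assms(2,3) \<open>compact K\<close> assms(4)
          ESP_partial_derivative_le[OF assms(1,2)] \<open>\<rho> < \<theta>\<close>] by blast
  show thesis
    by (rule that[OF \<open>\<epsilon> > 0\<close> \<open>0 \<le> \<theta>\<close> \<open>\<theta> < 1\<close> contraction])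
qed

locale backward_iteration =
  fixes Phi Psi Q :: "real^'k \<Rightarrow> real^'k"
    and w :: "real^'k \<Rightarrow> real"
    and F :: "(real^'n) \<times> real \<Rightarrow> real^'n"
    and K :: "(real^'n) set" and h\<^sub>0 :: "real^'n"
    and f :: "real^'k \<Rightarrow> real^'n"
    and \<epsilon> \<theta> :: real
  assumes torus_map_Psi: "torus_map Psi" and continuous_Psi: "continuous_on UNIV Psi"
    and Psi_Phi: "\<And>x. tequiv (Psi (Phi x)) x" and Phi_Psi: "\<And>x. tequiv (Phi (Psi x)) x"
    and continuous_Q: "continuous_on UNIV Q" and torus_map_Q: "torus_map Q"
    and Phi_Q: "\<And>x. tequiv (Phi x) (Q x)"
    and torus_fun_w: "torus_fun w" and continuous_w: "continuous_on UNIV w"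
    and continuous_F: "continuous_on UNIV F"
    and F_K: "\<And>h u. h \<in> K \<Longrightarrow> u \<in> range w \<Longrightarrow> F (h, u) \<in> K" and h\<^sub>0_K: "h\<^sub>0 \<in> K"
    and \<epsilon>: "\<epsilon> > 0" and \<theta>: "0 \<le> \<theta>" "\<theta> < 1"
    and contraction: "\<And>a b u. a \<in> K \<Longrightarrow> dist b a < \<epsilon> \<Longrightarrow> u \<in> range w \<Longrightarrow>
                        norm (F (b, u) - F (a, u)) \<le> \<theta> * norm (b - a)"
    and sync: "sync_function Phi w F K f"
begin

text \<open>\<open>sync_approx n\<close> is the map \<open>f\<^sub>n\<close>: \<open>sync_approx n x\<close> is the state at \<open>x\<close> of the driven
  system started in \<open>h\<^sub>0\<close> at the point \<open>n\<close> steps back along the orbit of \<open>x\<close>.\<close>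
primrec sync_approx :: "nat \<Rightarrow> real^'k \<Rightarrow> real^'n" where
  "sync_approx 0 x = h\<^sub>0"
| "sync_approx (Suc n) x = F (sync_approx n (Psi x), w (Psi x))"

lemma sync_approx_in_K: "sync_approx n x \<in> K"
  by (induction n arbitrary: x) (simp_all add: h\<^sub>0_K F_K)

lemma torus_fun_sync_approx: "torus_fun (sync_approx n)"
proof (induction n)
  case (Suc n)
  show ?case
    unfolding torus_fun_def
  proof (intro allI impI)
    fix x y :: "real^'k" assume "tequiv x y"
    then have "tequiv (Psi x) (Psi y)"
      by (rule torus_mapD[OF torus_map_Psi])
    then show "sync_approx (Suc n) x = sync_approx (Suc n) y"
      using torus_funD[OF Suc] torus_funD[OF torus_fun_w] by simp
  qed
qed (simp add: torus_fun_def)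

lemma continuous_sync_approx: "continuous_on UNIV (sync_approx n)"
proof (induction n)
  case (Suc n)
  have "continuous_on UNIV (\<lambda>x. (sync_approx n (Psi x), w (Psi x)))"
    using continuous_Psi Suc continuous_w
    by (auto intro!: continuous_on_Pair intro: continuous_on_compose2)
  then show ?case
    using continuous_on_compose2[OF continuous_F] by fastforce
qed simp

lemma torus_fun_f: "torus_fun f" and continuous_f: "continuous_on UNIV f"
  and f_Phi: "\<And>x. f (Phi x) = F (f x, w x)"
  and f_attracts: "\<And>x h. h \<in> K \<Longrightarrow> (\<lambda>t. norm (traj Phi w F x h t - f ((Phi ^^ t) x))) \<longlonglongrightarrow> 0"
  using sync unfolding sync_function_def by blast+

lemma Psi_Q: "tequiv (Psi (Q z)) z"
proof -
  have "tequiv (Psi (Q z)) (Psi (Phi z))"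
    by (rule torus_mapD[OF torus_map_Psi tequiv_sym[OF Phi_Q]])
  also have "tequiv \<dots> z"
    by (rule Psi_Phi)
  finally show ?thesis .
qed

lemma sync_approx_Q: "sync_approx (Suc n) (Q z) = F (sync_approx n z, w z)"
  using torus_funD[OF torus_fun_sync_approx Psi_Q] torus_funD[OF torus_fun_w Psi_Q] by simp

lemma f_Q: "f (Q z) = F (f z, w z)"
  using torus_funD[OF torus_fun_f Phi_Q] f_Phi by metis

lemma Phi_funpow_Q_funpow: "tequiv ((Phi ^^ n) x) ((Q ^^ n) x)"
proof (induction n)
  case (Suc n)
  have "tequiv (Phi ((Phi ^^ n) x)) (Q ((Phi ^^ n) x))"
    by (rule Phi_Q)
  also have "tequiv \<dots> (Q ((Q ^^ n) x))"
    by (rule torus_mapD[OF torus_map_Q Suc])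
  finally show ?case
    by simp
qed simp

lemma Q_funpow_Psi_funpow: "tequiv ((Q ^^ n) ((Psi ^^ n) x)) x"
proof (induction n arbitrary: x)
  case (Suc n)
  have "tequiv (Q ((Q ^^ n) ((Psi ^^ n) (Psi x)))) (Q (Psi x))"
    by (rule torus_mapD[OF torus_map_Q Suc])
  also have "tequiv \<dots> (Phi (Psi x))"
    by (rule tequiv_sym[OF Phi_Q])
  also have "tequiv \<dots> x"
    by (rule Phi_Psi)
  finally show ?case
    by (simp add: funpow_swap1)
qed simp

lemma traj_eq_sync_approx: "traj Phi w F x h\<^sub>0 n = sync_approx n ((Q ^^ n) x)"
proof (induction n)
  case (Suc n)
  have "sync_approx (Suc n) ((Q ^^ Suc n) x) = F (sync_approx n ((Q ^^ n) x), w ((Q ^^ n) x))"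
    using sync_approx_Q by simp
  also have "\<dots> = F (traj Phi w F x h\<^sub>0 n, w ((Phi ^^ n) x))"
    using Suc torus_funD[OF torus_fun_w Phi_funpow_Q_funpow] by simp
  finally show ?case
    by simp
qed simp

definition sync_error :: "nat \<Rightarrow> real^'k \<Rightarrow> real" where
  "sync_error n x = norm (sync_approx n x - f x)"

lemma torus_fun_sync_error: "torus_fun (sync_error n)"
  using torus_fun_sync_approx torus_fun_f by (simp add: torus_fun_def sync_error_def)

lemma continuous_sync_error: "continuous_on UNIV (sync_error n)"
  unfolding sync_error_def[abs_def]
  by (intro continuous_intros continuous_sync_approx continuous_f)

lemma sync_error_contracts:
  assumes "sync_error n z < \<epsilon>"
  shows "sync_error (n + m) ((Q ^^ m) z) \<le> \<theta> ^ m * sync_error n z"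
proof (induction m)
  case (Suc m)
  define y where "y = (Q ^^ m) z"
  have "\<theta> ^ m * sync_error n z \<le> sync_error n z"
    using \<theta> by (simp add: sync_error_def mult_left_le_one_le power_le_one)
  then have "dist (f y) (sync_approx (n + m) y) < \<epsilon>"
    using Suc assms by (simp add: y_def sync_error_def dist_norm norm_minus_commute)
  have "sync_error (n + Suc m) ((Q ^^ Suc m) z) = norm (F (sync_approx (n + m) y, w y) - F (f y, w y))"
    unfolding sync_error_def y_def by (simp only: add_Suc_right funpow.simps(2) comp_apply sync_approx_Q f_Q)
  also have "\<dots> \<le> \<theta> * sync_error (n + m) y"
    using contraction[OF sync_approx_in_K \<open>dist (f y) (sync_approx (n + m) y) < \<epsilon>\<close> rangeI]
    by (simp add: sync_error_def norm_minus_commute)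
  also have "\<dots> \<le> \<theta> ^ Suc m * sync_error n z"
    using mult_left_mono[OF Suc \<theta>(1)] by (simp add: y_def mult.assoc)
  finally show ?case .
qed simp

lemma sync_error_small_along_orbit: "\<exists>N. sync_error N ((Q ^^ N) y) < \<epsilon>"
proof -
  have "\<forall>\<^sub>F t in sequentially. norm (traj Phi w F y h\<^sub>0 t - f ((Phi ^^ t) y)) < \<epsilon>"
    using order_tendstoD(2)[OF f_attracts[OF h\<^sub>0_K] \<epsilon>] .
  then obtain N where "norm (traj Phi w F y h\<^sub>0 N - f ((Phi ^^ N) y)) < \<epsilon>"
    unfolding eventually_sequentially by blast
  then show ?thesis
    using torus_funD[OF torus_fun_f Phi_funpow_Q_funpow]
    by (auto simp: sync_error_def traj_eq_sync_approx)
qed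

text \<open>Compactness of the torus makes the times of \<open>sync_error_small_along_orbit\<close> uniform;
  waiting longer does no harm by \<open>sync_error_contracts\<close>.\<close>
lemma sync_error_small_on_cube:
  obtains M where "\<And>y. y \<in> cbox 0 1 \<Longrightarrow> sync_error M ((Q ^^ M) y) < \<epsilon>"
proof -
  define V where "V N = {y. sync_error N ((Q ^^ N) y) < \<epsilon>}" for N
  have "continuous_on UNIV (\<lambda>y. sync_error N ((Q ^^ N) y))" for N
    by (rule continuous_on_compose2[OF continuous_sync_error continuous_on_funpow[OF continuous_Q]]) auto
  then have "open (V N)" for N
    unfolding V_def by (rule open_Collect_less[OF _ continuous_on_const])
  moreover have "cbox 0 1 \<subseteq> (\<Union>N\<in>UNIV. V N)"
    using sync_error_small_along_orbit unfolding V_def by blast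
  ultimately obtain I where "finite I" and I: "cbox 0 1 \<subseteq> (\<Union>N\<in>I. V N)"
    using compactE_image[OF compact_cbox, of UNIV V] by metis
  define M where "M = Max (insert 0 I)"
  have "sync_error M ((Q ^^ M) y) < \<epsilon>" if y: "y \<in> cbox 0 1" for y
  proof -
    obtain N where "N \<in> I" and N: "sync_error N ((Q ^^ N) y) < \<epsilon>"
      using I y unfolding V_def by blast
    then have "N \<le> M"
      using \<open>finite I\<close> by (simp add: M_def)
    then have "sync_error M ((Q ^^ M) y) = sync_error (N + (M - N)) ((Q ^^ (M - N)) ((Q ^^ N) y))"
      using funpow_add[of "M - N" N Q] by simp
    also have "\<dots> \<le> \<theta> ^ (M - N) * sync_error N ((Q ^^ N) y)"
      by (rule sync_error_contracts[OF N])
    also have "\<dots> \<le> sync_error N ((Q ^^ N) y)"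
      using \<theta> by (simp add: sync_error_def mult_left_le_one_le power_le_one)
    finally show ?thesis
      using N by simp
  qed
  then show thesis
    by (rule that)
qed

lemma sync_error_uniformly_small: obtains M where "\<And>x. sync_error M x < \<epsilon>"
proof -
  obtain M where M: "\<And>y. y \<in> cbox 0 1 \<Longrightarrow> sync_error M ((Q ^^ M) y) < \<epsilon>"
    using sync_error_small_on_cube by blast
  moreover have "sync_error M ((Q ^^ M) y) = sync_error M ((Q ^^ M) y')" if "tequiv y y'" for y y'
    by (rule torus_funD[OF torus_fun_sync_error torus_mapD[OF torus_map_funpow[OF torus_map_Q] that]])
  ultimately have "sync_error M ((Q ^^ M) y) < \<epsilon>" for y
    using tequiv_cbox_representative[of y] by metis
  then have "sync_error M x < \<epsilon>" for x
    using torus_funD[OF torus_fun_sync_error Q_funpow_Psi_funpow, of M M x] by metis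
  then show thesis
    by (rule that)
qed

lemma uniform_limit_sync_approx: "uniform_limit UNIV sync_approx f sequentially"
  unfolding uniform_limit_sequentially_iff
proof (intro allI impI)
  fix e :: real assume "e > 0"
  obtain M where M: "\<And>x. sync_error M x < \<epsilon>"
    using sync_error_uniformly_small by blast
  obtain m where m: "\<theta> ^ m < e / \<epsilon>"
    using real_arch_pow_inv[of "e / \<epsilon>" \<theta>] \<open>e > 0\<close> \<epsilon> \<theta> by auto
  show "\<exists>N. \<forall>n\<ge>N. \<forall>x\<in>UNIV. dist (sync_approx n x) (f x) < e"
  proof (intro exI[of _ "M + m"] allI impI ballI)
    fix n x assume "M + m \<le> n"
    define z where "z = (Psi ^^ (n - M)) x"
    have "sync_error n x = sync_error (M + (n - M)) ((Q ^^ (n - M)) z)"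
      using torus_funD[OF torus_fun_sync_error Q_funpow_Psi_funpow] \<open>M + m \<le> n\<close>
      by (simp add: z_def)
    also have "\<dots> \<le> \<theta> ^ (n - M) * sync_error M z"
      by (rule sync_error_contracts[OF M])
    also have "\<dots> \<le> \<theta> ^ m * \<epsilon>"
      using M[of z] \<theta> \<open>M + m \<le> n\<close>
      by (intro mult_mono power_decreasing) (auto simp: sync_error_def less_imp_le)
    also have "\<dots> < e"
      using m \<epsilon> by (simp add: pos_less_divide_eq)
    finally show "dist (sync_approx n x) (f x) < e"
      by (simp add: sync_error_def dist_norm)
  qed
qed

end

locale backward_iteration_C1 = backward_iteration Phi Psi Q w F K h\<^sub>0 f \<epsilon> \<theta>
  for Phi Psi Q :: "real^'k \<Rightarrow> real^'k" and w :: "real^'k \<Rightarrow> real"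
    and F :: "(real^'n) \<times> real \<Rightarrow> real^'n" and K h\<^sub>0 f \<epsilon> \<theta> +
  fixes Psi' :: "real^'k \<Rightarrow> ((real^'k) \<Rightarrow>\<^sub>L (real^'k))"
    and w' :: "real^'k \<Rightarrow> ((real^'k) \<Rightarrow>\<^sub>L real)"
    and F' :: "(real^'n) \<times> real \<Rightarrow> (((real^'n) \<times> real) \<Rightarrow>\<^sub>L (real^'n))"
    and \<kappa> \<rho> :: real
  assumes Psi': "\<And>x. (Psi has_derivative blinfun_apply (Psi' x)) (at x)"
    and continuous_Psi': "continuous_on UNIV Psi'" and norm_Psi': "\<And>x. norm (Psi' x) \<le> \<kappa>"
    and w': "\<And>x. (w has_derivative blinfun_apply (w' x)) (at x)"
    and continuous_w': "continuous_on UNIV w'"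
    and F': "\<And>p. (F has_derivative blinfun_apply (F' p)) (at p)"
    and continuous_F': "continuous_on UNIV F'"
    and compact_K: "compact K"
    and partial_F'_K: "\<And>h u. h \<in> K \<Longrightarrow> u \<in> range w \<Longrightarrow> norm (F' (h, u) o\<^sub>L embed_fst) \<le> \<rho>"
    and \<kappa>\<rho>: "\<kappa> * \<rho> < 1"
begin

lemma \<kappa>_nonneg: "0 \<le> \<kappa>"
  using norm_Psi'[of 0] norm_ge_zero order_trans by blast

lemma \<rho>_nonneg: "0 \<le> \<rho>"
  using partial_F'_K[OF h\<^sub>0_K rangeI] norm_ge_zero order_trans by blast

primrec sync_approx_deriv :: "nat \<Rightarrow> real^'k \<Rightarrow> ((real^'k) \<Rightarrow>\<^sub>L (real^'n))" where
  "sync_approx_deriv 0 x = 0"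
| "sync_approx_deriv (Suc n) x =
     (F' (sync_approx n (Psi x), w (Psi x))
        o\<^sub>L blinfun_pair (sync_approx_deriv n (Psi x)) (w' (Psi x))) o\<^sub>L Psi' x"

lemma has_derivative_sync_approx:
  "(sync_approx n has_derivative blinfun_apply (sync_approx_deriv n x)) (at x)"
proof (induction n arbitrary: x)
  case (Suc n)
  have "((\<lambda>x. (sync_approx n (Psi x), w (Psi x))) has_derivative
      (\<lambda>v. (sync_approx_deriv n (Psi x) (Psi' x v), w' (Psi x) (Psi' x v)))) (at x)"
    using has_derivative_compose[OF Psi' Suc] has_derivative_compose[OF Psi' w']
    by (auto intro: has_derivative_Pair simp: o_def)
  from has_derivative_compose[OF this F']
  show ?case
    by (simp add: o_def blinfun_compose.rep_eq)
next
  case 0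
  have "sync_approx 0 = (\<lambda>_. h\<^sub>0)"
    by auto
  then show ?case
    by (simp add: zero_blinfun.rep_eq)
qed

lemma continuous_sync_approx_deriv: "continuous_on UNIV (sync_approx_deriv n)"
proof (induction n)
  case (Suc n)
  have "continuous_on UNIV (\<lambda>x. (sync_approx n (Psi x), w (Psi x)))"
    using continuous_on_compose2[OF continuous_sync_approx continuous_Psi]
      continuous_on_compose2[OF continuous_w continuous_Psi]
    by (auto intro: continuous_on_Pair)
  then have "continuous_on UNIV (\<lambda>x. F' (sync_approx n (Psi x), w (Psi x)))"
    by (rule continuous_on_compose2[OF continuous_F']) simp
  moreover have "continuous_on UNIV (\<lambda>x. blinfun_pair (sync_approx_deriv n (Psi x)) (w' (Psi x)))"
    using continuous_on_compose2[OF Suc continuous_Psi] continuous_on_compose2[OF continuous_w' continuous_Psi]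
    by (auto intro: continuous_on_blinfun_pair)
  ultimately show ?case
    using continuous_Psi'
    by (auto intro!: bounded_bilinear.continuous_on[OF bounded_bilinear_blinfun_compose])
qed simp

lemma norm_w'_bounded: obtains W where "\<And>x. norm (w' x) \<le> W"
proof -
  have "compact (range w')"
    by (rule compact_range_torus_fun[OF torus_fun_derivative[OF torus_fun_w w'] continuous_w'])
  then obtain W where "\<forall>y\<in>range w'. norm y \<le> W"
    using compact_imp_bounded[OF \<open>compact (range w')\<close>] unfolding bounded_iff by blast
  then show thesis
    by (intro that) blast
qed

lemma norm_F'_bounded: obtains B where "\<And>h u. h \<in> K \<Longrightarrow> u \<in> range w \<Longrightarrow> norm (F' (h, u)) \<le> B"
proof -
  have "compact (F' ` (K \<times> range w))"
    by (rule compact_continuous_image[OF continuous_on_subset[OF continuous_F' subset_UNIV]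
          compact_Times[OF compact_K compact_range_torus_fun[OF torus_fun_w continuous_w]]])
  then obtain B where "\<forall>y\<in>F' ` (K \<times> range w). norm y \<le> B"
    using compact_imp_bounded[OF \<open>compact (F' ` (K \<times> range w))\<close>] unfolding bounded_iff by blast
  then show thesis
    by (intro that) blast
qed

lemma norm_sync_approx_deriv_bounded: obtains M where "\<And>n x. norm (sync_approx_deriv n x) \<le> M"
proof -
  obtain W where W: "\<And>x. norm (w' x) \<le> W"
    using norm_w'_bounded by blast
  obtain B where B: "\<And>h u. h \<in> K \<Longrightarrow> u \<in> range w \<Longrightarrow> norm (F' (h, u)) \<le> B"
    using norm_F'_bounded by blast
  have "0 \<le> B" "0 \<le> W"
    using B[OF h\<^sub>0_K rangeI] W[of 0] norm_ge_zero order_trans by blast+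
  define M where "M = \<kappa> * B * W / (1 - \<kappa> * \<rho>)"
  have "0 \<le> M"
    using \<kappa>_nonneg \<kappa>\<rho> \<open>0 \<le> B\<close> \<open>0 \<le> W\<close> by (simp add: M_def)
  have M: "(\<rho> * M + B * W) * \<kappa> = M"
    using \<kappa>\<rho> by (simp add: M_def field_simps)
  have "norm (sync_approx_deriv n x) \<le> M" for n x
  proof (induction n arbitrary: x)
    case (Suc n)
    define A where "A = F' (sync_approx n (Psi x), w (Psi x))"
    have "norm (A o\<^sub>L blinfun_pair (sync_approx_deriv n (Psi x)) (w' (Psi x))) \<le>
        norm (A o\<^sub>L embed_fst) * norm (sync_approx_deriv n (Psi x)) + norm A * norm (w' (Psi x))"
      by (rule norm_blinfun_pair_le)
    also have "\<dots> \<le> \<rho> * M + B * W"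
      unfolding A_def using partial_F'_K[OF sync_approx_in_K rangeI] B[OF sync_approx_in_K rangeI]
        Suc W \<rho>_nonneg \<open>0 \<le> B\<close> by (intro add_mono mult_mono) auto
    finally have pair: "norm (A o\<^sub>L blinfun_pair (sync_approx_deriv n (Psi x)) (w' (Psi x))) \<le> \<rho> * M + B * W" .
    have "norm (sync_approx_deriv (Suc n) x) \<le>
        norm (A o\<^sub>L blinfun_pair (sync_approx_deriv n (Psi x)) (w' (Psi x))) * norm (Psi' x)"
      unfolding A_def sync_approx_deriv.simps by (rule norm_blinfun_compose)
    also have "\<dots> \<le> (\<rho> * M + B * W) * \<kappa>"
      using \<rho>_nonneg \<open>0 \<le> M\<close> \<open>0 \<le> B\<close> \<open>0 \<le> W\<close> by (intro mult_mono pair norm_Psi') auto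
    finally show ?case
      using M by simp
  qed (simp add: \<open>0 \<le> M\<close>)
  then show thesis
    by (rule that)
qed

lemma norm_sync_approx_deriv_diff:
  "norm (sync_approx_deriv (Suc n) x - sync_approx_deriv (Suc m) x) \<le>
     \<kappa> * (\<rho> * norm (sync_approx_deriv n (Psi x) - sync_approx_deriv m (Psi x))
       + norm (F' (sync_approx n (Psi x), w (Psi x)) - F' (sync_approx m (Psi x), w (Psi x)))
         * (norm (sync_approx_deriv m (Psi x)) + norm (w' (Psi x))))"
proof -
  define A where "A = F' (sync_approx n (Psi x), w (Psi x))"
  define B where "B = F' (sync_approx m (Psi x), w (Psi x))"
  define X where "X = sync_approx_deriv n (Psi x)"
  define Y where "Y = sync_approx_deriv m (Psi x)"
  have "sync_approx_deriv (Suc n) x - sync_approx_deriv (Suc m) x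
      = ((A o\<^sub>L blinfun_pair X (w' (Psi x))) - (B o\<^sub>L blinfun_pair Y (w' (Psi x)))) o\<^sub>L Psi' x"
    by (simp add: A_def B_def X_def Y_def bounded_bilinear.diff_left[OF bounded_bilinear_blinfun_compose])
  also have "norm \<dots> \<le> norm ((A o\<^sub>L blinfun_pair X (w' (Psi x))) - (B o\<^sub>L blinfun_pair Y (w' (Psi x)))) * \<kappa>"
    using norm_blinfun_compose order_trans mult_left_mono[OF norm_Psi' norm_ge_zero] by blast
  also have "\<dots> \<le> (\<rho> * norm (X - Y) + norm (A - B) * (norm Y + norm (w' (Psi x)))) * \<kappa>"
  proof (rule mult_right_mono[OF order_trans[OF norm_blinfun_pair_diff] \<kappa>_nonneg])
    show "norm (A o\<^sub>L embed_fst) * norm (X - Y) + norm (A - B) * (norm Y + norm (w' (Psi x)))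
        \<le> \<rho> * norm (X - Y) + norm (A - B) * (norm Y + norm (w' (Psi x)))"
      unfolding A_def using partial_F'_K[OF sync_approx_in_K rangeI] by (simp add: mult_right_mono)
  qed
  finally show ?thesis
    by (simp add: A_def B_def X_def Y_def mult.commute)
qed

lemma F'_sync_approx_uniformly_Cauchy:
  assumes "\<eta> > 0"
  shows "\<exists>N. \<forall>n\<ge>N. \<forall>m\<ge>N. \<forall>x. norm (F' (sync_approx n x, w x) - F' (sync_approx m x, w x)) \<le> \<eta>"
proof -
  have "uniformly_continuous_on (K \<times> range w) F'"
    by (rule compact_uniformly_continuous[OF continuous_on_subset[OF continuous_F' subset_UNIV]
          compact_Times[OF compact_K compact_range_torus_fun[OF torus_fun_w continuous_w]]])
  then obtain d where "d > 0" and d: "\<And>p q. p \<in> K \<times> range w \<Longrightarrow> q \<in> K \<times> range w \<Longrightarrow>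
      dist q p < d \<Longrightarrow> dist (F' q) (F' p) < \<eta>"
    using assms unfolding uniformly_continuous_on_def by metis
  obtain N where N: "\<And>n x. N \<le> n \<Longrightarrow> dist (sync_approx n x) (f x) < d / 2"
    using uniform_limit_sync_approx \<open>d > 0\<close> unfolding uniform_limit_sequentially_iff
    by (metis UNIV_I half_gt_zero)
  have "norm (F' (sync_approx n x, w x) - F' (sync_approx m x, w x)) \<le> \<eta>" if "N \<le> n" "N \<le> m" for n m x
  proof -
    have "dist (sync_approx n x, w x) (sync_approx m x, w x) < d"
      using dist_triangle_half_l[OF N[OF that(1)] N[OF that(2)]] by (simp add: dist_Pair_Pair)
    then show ?thesis
      using d[of "(sync_approx m x, w x)" "(sync_approx n x, w x)"] sync_approx_in_K
      by (simp add: dist_norm less_imp_le)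
  qed
  then show ?thesis
    by blast
qed

lemma uniformly_Cauchy_sync_approx_deriv: "uniformly_Cauchy_on UNIV sync_approx_deriv"
proof -
  obtain M where M: "\<And>n x. norm (sync_approx_deriv n x) \<le> M"
    using norm_sync_approx_deriv_bounded by blast
  obtain W where W: "\<And>x. norm (w' x) \<le> W"
    using norm_w'_bounded by blast
  have "0 \<le> M + W"
    using M[of 0 0] W[of 0] by (meson add_nonneg_nonneg norm_ge_zero order_trans)
  show ?thesis
  proof (rule uniformly_Cauchy_on_contractive_recursion[OF M _ \<kappa>\<rho>])
    show "0 \<le> \<kappa> * \<rho>" "0 \<le> \<kappa> * (M + W)"
      using \<kappa>_nonneg \<rho>_nonneg \<open>0 \<le> M + W\<close> by simp_all
    fix \<delta> :: real assume "\<delta> > 0"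
    then obtain N where N: "\<And>n m x. N \<le> n \<Longrightarrow> N \<le> m \<Longrightarrow>
        norm (F' (sync_approx n x, w x) - F' (sync_approx m x, w x)) \<le> \<delta>"
      using F'_sync_approx_uniformly_Cauchy by blast
    have "norm (sync_approx_deriv (Suc n) x - sync_approx_deriv (Suc m) x)
        \<le> \<kappa> * \<rho> * norm (sync_approx_deriv n (Psi x) - sync_approx_deriv m (Psi x)) + \<kappa> * (M + W) * \<delta>"
      if "N \<le> n" "N \<le> m" for n m x
    proof -
      have "norm (F' (sync_approx n (Psi x), w (Psi x)) - F' (sync_approx m (Psi x), w (Psi x)))
          * (norm (sync_approx_deriv m (Psi x)) + norm (w' (Psi x))) \<le> \<delta> * (M + W)"
        using N[OF that] M W \<open>\<delta> > 0\<close> by (intro mult_mono add_mono) auto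
      then have "norm (sync_approx_deriv (Suc n) x - sync_approx_deriv (Suc m) x)
          \<le> \<kappa> * (\<rho> * norm (sync_approx_deriv n (Psi x) - sync_approx_deriv m (Psi x)) + \<delta> * (M + W))"
        using \<kappa>_nonneg by (intro order_trans[OF norm_sync_approx_deriv_diff] mult_left_mono add_left_mono)
      then show ?thesis
        by (simp add: algebra_simps)
    qed
    then show "\<exists>N. \<forall>n\<ge>N. \<forall>m\<ge>N. \<forall>x. norm (sync_approx_deriv (Suc n) x - sync_approx_deriv (Suc m) x)
        \<le> \<kappa> * \<rho> * norm (sync_approx_deriv n (Psi x) - sync_approx_deriv m (Psi x)) + \<kappa> * (M + W) * \<delta>"
      by blast
  qed
qed

theorem C1_map_sync_function: "C1_map f"
  using has_derivative_sync_approx continuous_sync_approx_deriv uniformly_Cauchy_sync_approx_deriv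
    tendsto_uniform_limitI[OF uniform_limit_sync_approx UNIV_I]
  by (rule C1_map_uniform_limit)

end

theorem proposition2:
  fixes Phi Psi :: "real^'k \<Rightarrow> real^'k"
    and w :: "real^'k \<Rightarrow> real"
    and F :: "(real^'n) \<times> real \<Rightarrow> real^'n"
    and \<kappa> \<rho> :: real and K :: "(real^'n) set"
  assumes "regular_base_system Phi"
    and "torus_map Psi" and "\<forall>x. tequiv (Psi (Phi x)) x" and "\<forall>x. tequiv (Phi (Psi x)) x"
    and "\<forall>x. Psi differentiable (at x)"
    and "\<kappa> \<ge> 1" and "\<forall>x. onorm (frechet_derivative Psi (at x)) \<le> \<kappa>"
    and "torus_fun w" and "C2_map w"
    and "C2_map F"
    and "ESP F (range w) \<rho> K" and "\<rho> < 1 / \<kappa>"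
  shows "\<forall>f. sync_function Phi w F K f \<longrightarrow> C1_map f"
proof (intro allI impI)
  fix f assume sync: "sync_function Phi w F K f"
  obtain Q where Q: "continuous_on UNIV Q" "torus_map Q" "\<And>x. tequiv (Phi x) (Q x)"
    using regular_base_system_continuous_lift[OF assms(1)] by blast
  obtain Psi' where Psi': "\<And>x. (Psi has_derivative blinfun_apply (Psi' x)) (at x)"
    "continuous_on UNIV Psi'" "\<And>x. norm (Psi' x) \<le> \<kappa>"
    using regular_base_system_inverse_derivative[OF assms(1,2)] assms(3,5,7) by metis
  obtain w' F' where w': "\<And>x. (w has_derivative blinfun_apply (w' x)) (at x)" "continuous_on UNIV w'"
    and F': "\<And>p. (F has_derivative blinfun_apply (F' p)) (at p)" "continuous_on UNIV F'"
    using C2_map_imp_C1_map[OF assms(9)] C2_map_imp_C1_map[OF assms(10)] unfolding C1_map_def by blast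
  note continuous_w = C1_map_continuous[OF C2_map_imp_C1_map[OF assms(9)]]
  obtain \<epsilon> \<theta> where contraction: "\<epsilon> > 0" "0 \<le> \<theta>" "\<theta> < 1"
    "\<And>a b u. a \<in> K \<Longrightarrow> dist b a < \<epsilon> \<Longrightarrow> u \<in> range w \<Longrightarrow>
      norm (F (b, u) - F (a, u)) \<le> \<theta> * norm (b - a)"
    using ESP_contraction_near_K[OF assms(11) F' compact_range_torus_fun[OF assms(8) continuous_w]] by blast
  obtain h\<^sub>0 where "h\<^sub>0 \<in> K"
    using assms(11) unfolding ESP_def by blast
  have "\<kappa> * \<rho> < 1"
    using assms(6,12) by (simp add: field_simps)
  have "continuous_on UNIV Psi"
    using Psi'(1) by (blast intro: continuous_at_imp_continuous_on has_derivative_continuous)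
  interpret backward_iteration_C1 Phi Psi Q w F K h\<^sub>0 f \<epsilon> \<theta> Psi' w' F' \<kappa> \<rho>
    using assms(2-4,8,11) \<open>continuous_on UNIV Psi\<close> Q Psi' w' F' sync continuous_w
      C1_map_continuous[OF C2_map_imp_C1_map[OF assms(10)]] contraction \<open>h\<^sub>0 \<in> K\<close> \<open>\<kappa> * \<rho> < 1\<close>
      ESP_partial_derivative_le[OF assms(11) F'(1)]
    by unfold_locales (auto simp: ESP_def)
  show "C1_map f"
    by (rule C1_map_sync_function)
qed

end
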